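(* (i) No strongly hyperhyperimmune set has upper density $1$. (ii) For every real $\epsilon>0$ there is a strongly hyperhyperimmune set with upper density at least $1-\epsilon$.
   Context: For $S\subseteq\omega$ and $n>0$, $\rho_n(S)=|S\cap[0,n)|/n$ and the upper density is $\limsup_n\rho_n(S)$. $W_e$ denotes the $e$th c.e. set. An infinite set $A\subseteq\omega$ is strongly hyperhyperimmune if there is no computable function $f$ such that the sets $W_{f(0)},W_{f(1)},\dots$ are pairwise disjoint and all intersect $A$. *)

theory Defs
  imports Complex_Main "HOL-Library.Nat_Bijection" "HOL-Library.Liminf_Limsup" "HOL-Library.Extended_Real"
begin

text \<open>Codes for partial recursive functions (arity-free presentation: a function
applied to an argument list simply uses the arguments it needs).\<close>

datatype recf =
    Zero
  | Succ
  | Proj nat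
  | Comp recf "recf list"
  | Prim recf recf
  | Mu recf

inductive eval :: "recf \<Rightarrow> nat list \<Rightarrow> nat \<Rightarrow> bool" where
  eval_Zero: "eval Zero xs 0"
| eval_Succ: "eval Succ (x # xs) (Suc x)"
| eval_Proj: "i < length xs \<Longrightarrow> eval (Proj i) xs (xs ! i)"
| eval_Comp: "list_all2 (\<lambda>g y. eval g xs y) gs ys \<Longrightarrow> eval f ys z \<Longrightarrow> eval (Comp f gs) xs z"
| eval_Prim0: "eval f xs y \<Longrightarrow> eval (Prim f g) (0 # xs) y"
| eval_PrimS: "eval (Prim f g) (n # xs) y \<Longrightarrow> eval g (n # y # xs) z \<Longrightarrow>
      eval (Prim f g) (Suc n # xs) z"
| eval_Mu: "eval f (n # xs) 0 \<Longrightarrow> (\<forall>m<n. \<exists>y. eval f (m # xs) y \<and> 0 < y) \<Longrightarrow>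
      eval (Mu f) xs n"

fun enc :: "recf \<Rightarrow> nat" where
  "enc Zero = prod_encode (0, 0)"
| "enc Succ = prod_encode (1, 0)"
| "enc (Proj i) = prod_encode (2, i)"
| "enc (Comp f gs) = prod_encode (3, prod_encode (enc f, list_encode (map enc gs)))"
| "enc (Prim f g) = prod_encode (4, prod_encode (enc f, enc g))"
| "enc (Mu f) = prod_encode (5, enc f)"

text \<open>The e-th c.e. set: the domain of the e-th partial recursive function
(empty if e is not the number of a code).\<close>

definition W :: "nat \<Rightarrow> nat set" where
  "W e = {x. \<exists>c y. enc c = e \<and> eval c [x] y}"

definition computable :: "(nat \<Rightarrow> nat) \<Rightarrow> bool" where
  "computable f \<longleftrightarrow> (\<exists>c. \<forall>n. eval c [n] (f n))"

definition strongly_hyperhyperimmune :: "nat set \<Rightarrow> bool" where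
  "strongly_hyperhyperimmune A \<longleftrightarrow> infinite A \<and>
     \<not> (\<exists>f. computable f \<and> (\<forall>i j. i \<noteq> j \<longrightarrow> W (f i) \<inter> W (f j) = {})
            \<and> (\<forall>i. W (f i) \<inter> A \<noteq> {}))"

text \<open>rho n S for n > 0 (indexed by Suc n to avoid n = 0).\<close>

definition rho :: "nat \<Rightarrow> nat set \<Rightarrow> real" where
  "rho n S = real (card (S \<inter> {0..<n})) / real n"

definition upper_density :: "nat set \<Rightarrow> ereal" where
  "upper_density S = limsup (\<lambda>n. ereal (rho (Suc n) S))"

end

theory Submission
  imports Defs "HOL-Library.Countable_Set" "HOL-Library.Disjoint_Sets"
begin

text \<open>
  (i) The sets D_i = {x. x + 1 = 2^i (2k + 1) for some k} are c.e. uniformly in i, pairwise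
  disjoint, and D_i has density 2^-(i+1). A set missing some D_i therefore has upper density
  below 1, so a set of upper density 1 meets every D_i and is not strongly hyperhyperimmune.

  (ii) The computable disjoint families can be listed (non-effectively) as X_0, X_1, ....
  Build B in stages, adding at stage s one member of X_s that avoids [0, n_s), where n_s is a
  length at which the current set has density at most e. Only finitely many members meet
  [0, n_s), and among M further members one has density at most 1/M below infinitely many
  lengths at which the current set is sparse; so sparseness, with slightly less slack, survives.
  Every family then has a member inside B, so -B is strongly hyperhyperimmune, and -B has
  density at least 1 - e at every n_s.
\<close>

instance recf :: countable
  by countable_datatype

inductive_cases eval_CompE: "eval (Comp f gs) xs z"
inductive_cases eval_MuE: "eval (Mu f) xs z"

lemma list_all2_functional:
  assumes "list_all2 P xs ys" "list_all2 Q xs zs" "\<And>x y z. P x y \<Longrightarrow> Q x z \<Longrightarrow> z = y"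
  shows "zs = ys"
  using assms by (induction xs ys arbitrary: zs rule: list_all2_induct) (auto simp: list_all2_Cons1)

lemma eval_deterministic: "eval c xs y \<Longrightarrow> eval c xs y' \<Longrightarrow> y' = y"
proof (induction arbitrary: y' rule: eval.induct)
  case eval_Zero
  from eval_Zero.prems show ?case by (cases rule: eval.cases) auto
next
  case eval_Succ
  from eval_Succ.prems show ?case by (cases rule: eval.cases) auto
next
  case eval_Proj
  from eval_Proj.prems show ?case by (cases rule: eval.cases) auto
next
  case (eval_Prim0 f xs y)
  from eval_Prim0.prems show ?case by (cases rule: eval.cases) (auto dest: eval_Prim0.IH)
next
  case (eval_Comp xs gs ys f z)
  then obtain ys' where "list_all2 (\<lambda>g y. eval g xs y) gs ys'" "eval f ys' y'"
    by (auto elim: eval_CompE)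
  moreover from this(1) have "ys' = ys"
    by (rule list_all2_functional[OF eval_Comp.IH(1)]) auto
  ultimately show ?case using eval_Comp.IH(2) by simp
next
  case (eval_PrimS f g n xs y z)
  from eval_PrimS.prems show ?case by (cases rule: eval.cases) (auto dest: eval_PrimS.IH)
next
  case (eval_Mu f n xs)
  from eval_Mu.prems obtain n' where n': "y' = n'" "eval f (n' # xs) 0"
    "\<forall>m<n'. \<exists>y. eval f (m # xs) y \<and> 0 < y"
    by (auto elim: eval_MuE)
  show ?case
  proof (rule linorder_cases[of n' n])
    assume "n' < n"
    with eval_Mu.IH(2) n'(2) show ?thesis by force
  next
    assume "n < n'"
    with n'(3) eval_Mu.IH(1) show ?thesis by force
  qed (use n' in simp)
qed

lemma enc_inject: "enc c = enc d \<longleftrightarrow> c = d"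
proof (induction c arbitrary: d)
  case (Comp f gs)
  show ?case
  proof (cases d)
    case (Comp f' gs')
    have "map enc gs = map enc gs' \<longleftrightarrow> gs = gs'"
      using Comp.IH(2) by (induction gs arbitrary: gs') (auto simp: Cons_eq_map_conv)
    with Comp.IH(1) show ?thesis
      by (simp add: \<open>d = Comp f' gs'\<close> list_encode_eq)
  qed auto
qed (case_tac d; simp)+

lemma W_enc: "W (enc c) = {x. \<exists>y. eval c [x] y}"
  by (auto simp: W_def enc_inject)

lemma eval_Comp1I: "eval g xs a \<Longrightarrow> eval f [a] z \<Longrightarrow> eval (Comp f [g]) xs z"
  by (rule eval_Comp[of _ _ "[a]"]) auto

lemma eval_Comp2I:
  "eval g xs a \<Longrightarrow> eval h xs b \<Longrightarrow> eval f [a, b] z \<Longrightarrow> eval (Comp f [g, h]) xs z"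
  by (rule eval_Comp[of _ _ "[a, b]"]) auto

lemma eval_SuccI: "z = Suc a \<Longrightarrow> eval Succ (a # xs) z"
  using eval_Succ by simp

lemma eval_ProjI: "i < length xs \<Longrightarrow> z = xs ! i \<Longrightarrow> eval (Proj i) xs z"
  using eval_Proj by simp

primrec const_code :: "nat \<Rightarrow> recf" where
  "const_code 0 = Zero"
| "const_code (Suc n) = Comp Succ [const_code n]"

lemma eval_const_code: "eval (const_code n) xs n"
  by (induction n) (auto intro: eval_Zero eval_Comp1I eval_SuccI)

definition add_code :: recf where
  "add_code = Prim (Proj 0) (Comp Succ [Proj 1])"

lemma eval_add_code: "z = a + b \<Longrightarrow> eval add_code (a # b # xs) z"
  unfolding add_code_def
proof (induction a arbitrary: z)
  case 0
  then show ?case by (auto intro!: eval_Prim0 eval_ProjI)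
next
  case (Suc a)
  then show ?case
    by (intro eval_PrimS[OF Suc.IH[OF refl]]) (auto intro!: eval_Comp1I eval_ProjI eval_SuccI)
qed

definition mul_code :: recf where
  "mul_code = Prim Zero (Comp add_code [Proj 1, Proj 2])"

lemma eval_mul_code: "z = a * b \<Longrightarrow> eval mul_code (a # b # xs) z"
  unfolding mul_code_def
proof (induction a arbitrary: z)
  case 0
  then show ?case by (auto intro!: eval_Prim0 eval_Zero)
next
  case (Suc a)
  then show ?case
    by (intro eval_PrimS[OF Suc.IH[OF refl]]) (auto intro!: eval_Comp2I eval_ProjI eval_add_code)
qed

definition pred_code :: recf where
  "pred_code = Prim Zero (Proj 0)"

lemma eval_pred_code: "z = a - 1 \<Longrightarrow> eval pred_code (a # xs) z"
  unfolding pred_code_def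
proof (induction a arbitrary: z)
  case 0
  then show ?case by (auto intro!: eval_Prim0 eval_Zero)
next
  case (Suc a)
  then show ?case
    by (intro eval_PrimS[OF Suc.IH[OF refl]]) (auto intro!: eval_ProjI)
qed

definition diff_code :: recf where
  "diff_code = Prim (Proj 0) (Comp pred_code [Proj 1])"

lemma eval_diff_code: "z = b - a \<Longrightarrow> eval diff_code (a # b # xs) z"
  unfolding diff_code_def
proof (induction a arbitrary: z)
  case 0
  then show ?case by (auto intro!: eval_Prim0 eval_ProjI)
next
  case (Suc a)
  then show ?case
    by (intro eval_PrimS[OF Suc.IH[OF refl]]) (auto intro!: eval_Comp1I eval_ProjI eval_pred_code)
qed

definition dist_code :: recf where
  "dist_code = Comp add_code [Comp diff_code [Proj 1, Proj 0], Comp diff_code [Proj 0, Proj 1]]"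

lemma eval_dist_code: "z = (a - b) + (b - a) \<Longrightarrow> eval dist_code (a # b # xs) z"
  unfolding dist_code_def by (auto intro!: eval_Comp2I eval_ProjI eval_diff_code eval_add_code)

definition triangle_code :: recf where
  "triangle_code = Prim Zero (Comp add_code [Proj 1, Comp Succ [Proj 0]])"

lemma eval_triangle_code: "z = triangle a \<Longrightarrow> eval triangle_code (a # xs) z"
  unfolding triangle_code_def
proof (induction a arbitrary: z)
  case 0
  then show ?case by (auto intro!: eval_Prim0 eval_Zero)
next
  case (Suc a)
  then show ?case
    by (intro eval_PrimS[OF Suc.IH[OF refl]])
      (auto intro!: eval_Comp2I eval_Comp1I eval_ProjI eval_SuccI eval_add_code)
qed

definition pair_code :: recf where
  "pair_code = Comp add_code [Comp triangle_code [Comp add_code [Proj 0, Proj 1]], Proj 0]"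

lemma eval_pair_code: "z = prod_encode (a, b) \<Longrightarrow> eval pair_code (a # b # xs) z"
  unfolding pair_code_def prod_encode_def
  by (auto intro!: eval_Comp2I eval_Comp1I eval_ProjI eval_triangle_code eval_add_code)

definition pow2_code :: recf where
  "pow2_code = Prim (const_code 1) (Comp mul_code [const_code 2, Proj 1])"

lemma eval_pow2_code: "z = 2 ^ a \<Longrightarrow> eval pow2_code (a # xs) z"
  unfolding pow2_code_def
proof (induction a arbitrary: z)
  case 0
  then show ?case using eval_Prim0[OF eval_const_code[of 1]] by simp
next
  case (Suc a)
  then show ?case
    by (intro eval_PrimS[OF Suc.IH[OF refl]])
      (auto intro!: eval_Comp2I eval_ProjI eval_const_code eval_mul_code)
qed

lemma eval_Mu_iff_zero:
  assumes "\<And>k. eval f (k # xs) (g k)"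
  shows "(\<exists>y. eval (Mu f) xs y) \<longleftrightarrow> (\<exists>k. g k = 0)"
proof
  assume "\<exists>y. eval (Mu f) xs y"
  then obtain k where "eval f (k # xs) 0" by (auto elim: eval_MuE)
  then show "\<exists>k. g k = 0" using assms eval_deterministic by blast
next
  assume "\<exists>k. g k = 0"
  then have "g (LEAST k. g k = 0) = 0" by (rule LeastI_ex)
  moreover have "0 < g m" if "m < (LEAST k. g k = 0)" for m
    using not_less_Least[OF that] by simp
  ultimately show "\<exists>y. eval (Mu f) xs y"
    using assms by (metis eval_Mu)
qed

definition dyadic_class :: "nat \<Rightarrow> nat set" where
  "dyadic_class i = {x. \<exists>k. Suc x = 2 ^ i * Suc (2 * k)}"

definition dyadic_test_code :: recf where
  "dyadic_test_code = Comp dist_code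
     [Comp Succ [Proj 1],
      Comp mul_code [Comp pow2_code [Proj 2], Comp Succ [Comp add_code [Proj 0, Proj 0]]]]"

lemma eval_dyadic_test_code:
  "eval dyadic_test_code (k # x # i # xs)
     ((Suc x - 2 ^ i * Suc (2 * k)) + (2 ^ i * Suc (2 * k) - Suc x))"
  unfolding dyadic_test_code_def
  by (auto intro!: eval_Comp2I eval_Comp1I eval_ProjI eval_SuccI eval_dist_code eval_mul_code
      eval_pow2_code eval_add_code simp: mult_2)

definition dyadic_code :: "nat \<Rightarrow> recf" where
  "dyadic_code i = Comp (Mu dyadic_test_code) [Proj 0, const_code i]"

lemma W_dyadic_code: "W (enc (dyadic_code i)) = dyadic_class i"
proof -
  have "eval (dyadic_code i) [x] y \<longleftrightarrow> eval (Mu dyadic_test_code) [x, i] y" for x y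
  proof
    assume "eval (dyadic_code i) [x] y"
    then obtain u v where
      "eval (Proj 0) [x] u" "eval (const_code i) [x] v" "eval (Mu dyadic_test_code) [u, v] y"
      unfolding dyadic_code_def by (auto elim!: eval_CompE simp: list_all2_Cons1)
    moreover have "eval (Proj 0) [x] x" by (rule eval_ProjI) auto
    ultimately show "eval (Mu dyadic_test_code) [x, i] y"
      using eval_const_code eval_deterministic by metis
  qed (auto simp: dyadic_code_def intro!: eval_Comp2I eval_ProjI eval_const_code)
  moreover have "(\<exists>y. eval (Mu dyadic_test_code) [x, i] y) \<longleftrightarrow> x \<in> dyadic_class i" for x
    by (subst eval_Mu_iff_zero[OF eval_dyadic_test_code]) (auto simp: dyadic_class_def)
  ultimately show ?thesis
    by (auto simp: W_enc)
qed

text \<open>Since \<open>enc (Comp Succ [c]) = \<langle>3, \<langle>enc Succ, Suc \<langle>enc c, 0\<rangle>\<rangle>\<rangle>\<close>, where \<open>\<langle>_, _\<rangle>\<close> is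
  \<open>prod_encode\<close>, the code numbers of the constants arise by primitive recursion.\<close>

definition index_const_code :: recf where
  "index_const_code = Prim (const_code (enc Zero))
     (Comp pair_code [const_code 3,
        Comp pair_code [const_code (enc Succ), Comp Succ [Comp pair_code [Proj 1, Zero]]]])"

lemma eval_index_const_code: "eval index_const_code (n # xs) (enc (const_code n))"
  unfolding index_const_code_def
proof (induction n)
  case 0
  then show ?case using eval_Prim0[OF eval_const_code] by simp
next
  case (Suc n)
  then show ?case
    by (intro eval_PrimS[OF Suc.IH])
      (auto intro!: eval_Comp2I eval_Comp1I eval_const_code eval_ProjI eval_Zero eval_pair_code
        eval_SuccI)
qed

lemma computable_enc_dyadic_code: "computable (\<lambda>i. enc (dyadic_code i))"
proof -
  define c where "c = Comp pair_code [const_code 3,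
    Comp pair_code [const_code (enc (Mu dyadic_test_code)),
      Comp Succ [Comp pair_code [const_code (enc (Proj 0)),
        Comp Succ [Comp pair_code [index_const_code, Zero]]]]]]"
  have "eval c [i] (enc (dyadic_code i))" for i
    unfolding c_def dyadic_code_def
    by (auto intro!: eval_Comp2I eval_Comp1I eval_const_code eval_Zero eval_pair_code eval_SuccI
        eval_index_const_code)
  then show ?thesis unfolding computable_def by blast
qed

lemma rho_nonneg: "0 \<le> rho m S"
  by (simp add: rho_def)

lemma rho_le_one: "rho m S \<le> 1"
  by (cases "m = 0") (auto simp: rho_def card_mono[of "{0..<m}", simplified])

lemma rho_mono: "S \<inter> {0..<m} \<subseteq> T \<Longrightarrow> rho m S \<le> rho m T"
  unfolding rho_def by (intro divide_right_mono) (auto intro!: card_mono)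

lemma rho_Un_le: "rho m (S \<union> T) \<le> rho m S + rho m T"
proof -
  have "card ((S \<union> T) \<inter> {0..<m}) \<le> card (S \<inter> {0..<m}) + card (T \<inter> {0..<m})"
    by (metis Int_Un_distrib2 card_Un_le)
  then show ?thesis
    unfolding rho_def add_divide_distrib[symmetric] by (intro divide_right_mono) auto
qed

lemma rho_Compl: "0 < m \<Longrightarrow> rho m (- S) = 1 - rho m S"
proof -
  assume "0 < m"
  have "- S \<inter> {0..<m} = {0..<m} - S \<inter> {0..<m}" by auto
  then have "card (- S \<inter> {0..<m}) = m - card (S \<inter> {0..<m})"
    by (simp add: card_Diff_subset)
  moreover have "card (S \<inter> {0..<m}) \<le> m"
    using card_mono[of "{0..<m}" "S \<inter> {0..<m}"] by simp
  ultimately show ?thesis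
    using \<open>0 < m\<close> by (simp add: rho_def of_nat_diff field_simps)
qed

lemma sum_rho_disjoint_family_on:
  assumes "disjoint_family_on Y J" "finite J"
  shows "(\<Sum>i\<in>J. rho m (Y i)) = rho m (\<Union>i\<in>J. Y i)"
proof -
  have "(\<Sum>i\<in>J. card (Y i \<inter> {0..<m})) = card (\<Union>i\<in>J. Y i \<inter> {0..<m})"
    using assms by (subst card_UN_disjoint) (auto simp: disjoint_family_on_def)
  then show ?thesis
    unfolding rho_def by (simp add: sum_divide_distrib[symmetric] flip: of_nat_sum)
qed

lemma upper_density_le:
  "eventually (\<lambda>m. rho m S \<le> c) sequentially \<Longrightarrow> upper_density S \<le> ereal c"
  unfolding upper_density_def
  by (rule Limsup_bounded) (simp add: eventually_sequentially_Suc[of "\<lambda>m. rho m S \<le> c"])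

lemma upper_density_ge:
  assumes "frequently (\<lambda>m. c \<le> rho m S) sequentially"
  shows "ereal c \<le> upper_density S"
proof (rule ccontr)
  assume "\<not> ereal c \<le> upper_density S"
  then have "eventually (\<lambda>n. ereal (rho (Suc n) S) < ereal c) sequentially"
    unfolding upper_density_def by (intro Limsup_lessD) simp
  then have "eventually (\<lambda>m. \<not> c \<le> rho m S) sequentially"
    using eventually_sequentially_Suc[of "\<lambda>m. rho m S < c"] by (simp add: not_le)
  with assms show False
    by (simp add: frequently_def)
qed

lemma upper_density_finite: "finite S \<Longrightarrow> upper_density S = 0"
proof -
  assume "finite S"
  have lim: "(\<lambda>n. real (card S) / real (Suc n)) \<longlonglongrightarrow> 0"
    using lim_const_over_n LIMSEQ_Suc by blast
  have le: "rho (Suc n) S \<le> real (card S) / real (Suc n)" for n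
    unfolding rho_def using card_mono[OF \<open>finite S\<close>, of "S \<inter> {0..<Suc n}"]
    by (intro divide_right_mono) auto
  have "(\<lambda>n. rho (Suc n) S) \<longlonglongrightarrow> 0"
    by (rule tendsto_sandwich[OF _ _ tendsto_const lim])
      (simp_all add: rho_nonneg le del: of_nat_Suc)
  then show ?thesis
    unfolding upper_density_def zero_ereal_def
    by (intro lim_imp_Limsup trivial_limit_sequentially) (simp add: tendsto_ereal)
qed

lemma dyadic_class_disjoint: "disjoint_family dyadic_class"
proof -
  have no_collision: False if "i < j" "(2::nat) ^ i * Suc (2 * a) = 2 ^ j * Suc (2 * b)" for i j a b
  proof -
    have "(2::nat) ^ j = 2 ^ i * 2 ^ (j - i)"
      using \<open>i < j\<close> by (simp flip: power_add)
    with that(2) have "2 ^ i * Suc (2 * a) = 2 ^ i * (2 ^ (j - i) * Suc (2 * b))"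
      by (simp only: mult.assoc)
    then have "Suc (2 * a) = 2 ^ (j - i) * Suc (2 * b)"
      by (subst (asm) mult_cancel_left) simp
    moreover have "even ((2::nat) ^ (j - i) * Suc (2 * b))"
      using \<open>i < j\<close> by simp
    ultimately have "even (Suc (2 * a))"
      by (simp only:)
    then show False by simp
  qed
  show ?thesis
    unfolding disjoint_family_on_def
  proof (intro ballI impI)
    fix i j :: nat assume "i \<noteq> j"
    have False if "x \<in> dyadic_class i" "x \<in> dyadic_class j" for x
    proof -
      from that obtain a b where "Suc x = 2 ^ i * Suc (2 * a)" "Suc x = 2 ^ j * Suc (2 * b)"
        unfolding dyadic_class_def by blast
      then show False
        using no_collision[of i j a b] no_collision[of j i b a] \<open>i \<noteq> j\<close> by (cases "i < j") auto
    qed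
    then show "dyadic_class i \<inter> dyadic_class j = {}" by blast
  qed
qed

lemma card_dyadic_class_ge: "m div 2 ^ Suc i \<le> card (dyadic_class i \<inter> {0..<m})"
proof -
  let ?g = "\<lambda>k. 2 ^ i * Suc (2 * k) - 1"
  have "inj ?g"
  proof (rule injI)
    fix k l assume "?g k = ?g l"
    moreover have "0 < (2::nat) ^ i * Suc (2 * k)" "0 < (2::nat) ^ i * Suc (2 * l)"
      by simp_all
    ultimately have "(2::nat) ^ i * Suc (2 * k) = 2 ^ i * Suc (2 * l)"
      by linarith
    then show "k = l" by simp
  qed
  moreover have "?g ` {..<m div 2 ^ Suc i} \<subseteq> dyadic_class i \<inter> {0..<m}"
  proof clarify
    fix k assume "k < m div 2 ^ Suc i"
    have "2 ^ i * Suc (2 * k) < 2 ^ Suc i * Suc k"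
      by simp
    also have "\<dots> \<le> 2 ^ Suc i * (m div 2 ^ Suc i)"
      using \<open>k < m div 2 ^ Suc i\<close> by (intro mult_le_mono2) simp
    also have "\<dots> \<le> m" by (rule times_div_less_eq_dividend)
    finally show "?g k \<in> dyadic_class i \<inter> {0..<m}"
      by (auto simp: dyadic_class_def)
  qed
  ultimately show ?thesis
    using card_mono[of "dyadic_class i \<inter> {0..<m}" "?g ` {..<m div 2 ^ Suc i}"]
    by (simp add: card_image inj_on_subset)
qed

lemma eventually_rho_dyadic_class_ge:
  "eventually (\<lambda>m. 1 / 2 ^ Suc (Suc i) \<le> rho m (dyadic_class i)) sequentially"
proof (rule eventually_sequentiallyI)
  fix m :: nat assume m: "2 * 2 ^ Suc i \<le> m"
  define P :: nat where "P = 2 ^ Suc i"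
  define c where "c = card (dyadic_class i \<inter> {0..<m})"
  have "m mod P < P"
    by (simp add: P_def)
  then have "m < P * Suc (m div P)"
    using mult_div_mod_eq[of P m] by (simp only: mult_Suc_right)
  also have "\<dots> \<le> P * Suc c"
    using card_dyadic_class_ge[of m i] by (simp add: P_def c_def)
  finally have "m \<le> 2 * (P * c)"
    using m unfolding P_def by simp
  then have "real m \<le> 2 * real P * real c"
    by (metis mult.assoc of_nat_le_iff of_nat_mult of_nat_numeral)
  moreover have "0 < real m"
    using m less_le_trans[of 0 "2 * 2 ^ Suc i" m] by simp
  ultimately show "1 / 2 ^ Suc (Suc i) \<le> rho m (dyadic_class i)"
    unfolding rho_def c_def[symmetric] P_def by (simp add: field_simps)
qed

lemma strongly_hyperhyperimmune_iff:
  "strongly_hyperhyperimmune A \<longleftrightarrow> infinite A \<and>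
     (\<forall>f. computable f \<longrightarrow> disjoint_family (\<lambda>i. W (f i)) \<longrightarrow> (\<exists>i. W (f i) \<inter> A = {}))"
  unfolding strongly_hyperhyperimmune_def disjoint_family_on_def by blast

lemma upper_density_less_one_if_disjoint:
  assumes "0 < c" "eventually (\<lambda>m. c \<le> rho m D) sequentially" "A \<inter> D = {}"
  shows "upper_density A < 1"
proof -
  have "eventually (\<lambda>m. rho m A \<le> 1 - c) sequentially"
    using assms(2) eventually_gt_at_top[of 0]
  proof eventually_elim
    case (elim m)
    have "rho m A \<le> rho m (- D)"
      using assms(3) by (intro rho_mono) auto
    also have "\<dots> = 1 - rho m D"
      using elim by (simp add: rho_Compl)
    finally show ?case
      using elim by linarith
  qed
  then have "upper_density A \<le> ereal (1 - c)"
    by (rule upper_density_le)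
  also have "\<dots> < 1"
    using assms(1) by simp
  finally show ?thesis .
qed

theorem strongly_hyperhyperimmune_upper_density_neq_one:
  assumes "strongly_hyperhyperimmune A"
  shows "upper_density A \<noteq> 1"
proof
  assume "upper_density A = 1"
  then have "W (enc (dyadic_code i)) \<inter> A \<noteq> {}" for i
    using upper_density_less_one_if_disjoint[OF _ eventually_rho_dyadic_class_ge, of i A]
    by (auto simp: W_dyadic_code Int_commute)
  with assms computable_enc_dyadic_code dyadic_class_disjoint show False
    by (auto simp: strongly_hyperhyperimmune_iff W_dyadic_code)
qed

lemma finite_meeting_disjoint_family:
  assumes "disjoint_family Y" "finite S"
  shows "finite {i. Y i \<inter> S \<noteq> {}}"
proof -
  define h where "h i = (SOME x. x \<in> Y i \<inter> S)" for i
  have h: "h i \<in> Y i \<inter> S" if "Y i \<inter> S \<noteq> {}" for i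
    using that unfolding h_def by (intro someI_ex[of "\<lambda>x. x \<in> Y i \<inter> S"]) blast
  have "inj_on h {i. Y i \<inter> S \<noteq> {}}"
  proof (rule inj_onI)
    fix i j assume "i \<in> {i. Y i \<inter> S \<noteq> {}}" "j \<in> {i. Y i \<inter> S \<noteq> {}}" "h i = h j"
    then have "h i \<in> Y i \<inter> Y j"
      using h[of i] h[of j] by simp
    then show "i = j"
      using assms(1) by (auto simp: disjoint_family_on_def)
  qed
  moreover have "h ` {i. Y i \<inter> S \<noteq> {}} \<subseteq> S"
    using h by auto
  ultimately show ?thesis
    using assms(2) inj_on_finite by blast
qed

lemma disjoint_family_on_member_rho_le:
  assumes "disjoint_family_on Y J" "finite J" "J \<noteq> {}"
  shows "\<exists>i\<in>J. rho m (Y i) \<le> 1 / card J"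
proof (rule ccontr)
  assume "\<not> ?thesis"
  then have "(\<Sum>i\<in>J. 1 / card J) < (\<Sum>i\<in>J. rho m (Y i))"
    using assms(2,3) by (intro sum_strict_mono) auto
  also have "\<dots> = rho m (\<Union>i\<in>J. Y i)"
    by (rule sum_rho_disjoint_family_on[OF assms(1,2)])
  also have "\<dots> \<le> 1"
    by (rule rho_le_one)
  finally show False
    using assms(2,3) by simp
qed

lemma frequently_rho_Un_disjoint_family_member:
  fixes Y :: "nat \<Rightarrow> nat set"
  assumes "disjoint_family Y" "0 < d" "\<exists>\<^sub>F m in sequentially. rho m U \<le> c"
  shows "\<exists>i. Y i \<inter> {..<n} = {} \<and> (\<exists>\<^sub>F m in sequentially. rho m (U \<union> Y i) \<le> c + d)"
proof -
  obtain M :: nat where M: "M \<noteq> 0" "1 / real M < d"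
    using real_arch_inverse[THEN iffD1, OF \<open>0 < d\<close>] by (auto simp: inverse_eq_divide)
  have "finite {i. Y i \<inter> {..<n} \<noteq> {}}"
    using finite_meeting_disjoint_family[OF assms(1)] by simp
  then have "infinite (- {i. Y i \<inter> {..<n} \<noteq> {}})"
    unfolding Compl_eq_Diff_UNIV by (rule Diff_infinite_finite[OF _ infinite_UNIV_nat])
  from infinite_arbitrarily_large[OF this, of M] obtain J
    where J: "finite J" "card J = M" "J \<subseteq> - {i. Y i \<inter> {..<n} \<noteq> {}}"
    by (elim exE conjE)
  with M have "J \<noteq> {}" by auto
  have "disjoint_family_on Y J"
    by (rule disjoint_family_on_mono[OF subset_UNIV assms(1)])
  then have small: "\<exists>i\<in>J. rho m (Y i) \<le> 1 / M" for m
    unfolding J(2)[symmetric] by (rule disjoint_family_on_member_rho_le[OF _ J(1) \<open>J \<noteq> {}\<close>])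
  have "\<exists>\<^sub>F m in sequentially. \<exists>i\<in>J. rho m U \<le> c \<and> rho m (Y i) \<le> 1 / M"
    using assms(3) by (rule frequently_elim1) (use small in fastforce)
  from frequently_bex_finite[OF J(1) this] obtain i
    where "i \<in> J" and i: "\<exists>\<^sub>F m in sequentially. rho m U \<le> c \<and> rho m (Y i) \<le> 1 / M"
    by blast
  have "\<exists>\<^sub>F m in sequentially. rho m (U \<union> Y i) \<le> c + d"
    using i
  proof (rule frequently_elim1)
    fix m assume "rho m U \<le> c \<and> rho m (Y i) \<le> 1 / M"
    then show "rho m (U \<union> Y i) \<le> c + d"
      using rho_Un_le[of m U "Y i"] M(2) by linarith
  qed
  moreover have "Y i \<inter> {..<n} = {}"
    using \<open>i \<in> J\<close> J(3) by auto
  ultimately show ?thesis by blast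
qed

lemma frequently_rho_UN_le:
  fixes U :: "nat \<Rightarrow> nat set"
  assumes U_mono: "\<And>s. U s \<subseteq> U (Suc s)"
    and n_less: "\<And>s. n s < n (Suc s)"
    and new_above: "\<And>s. (U (Suc s) - U s) \<inter> {..<n s} = {}"
    and rho_U: "\<And>s. rho (n s) (U s) \<le> e"
  shows "\<exists>\<^sub>F m in sequentially. rho m (\<Union>s. U s) \<le> e"
proof -
  have n_mono: "n s \<le> n t" if "s \<le> t" for s t
    using that n_less by (induction rule: dec_induct) (auto intro: less_imp_le order_trans)
  have U_below: "U t \<inter> {..<n s} \<subseteq> U s" for s t
  proof (induction t)
    case 0
    then show ?case
      using lift_Suc_mono_le[of U 0 s] U_mono by auto
  next
    case (Suc t)
    show ?case
    proof (cases "s \<le> t")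
      case True
      then show ?thesis
        using Suc.IH new_above[of t] n_mono[of s t] by auto
    next
      case False
      then show ?thesis
        using lift_Suc_mono_le[of U "Suc t" s] U_mono by auto
    qed
  qed
  show ?thesis
    unfolding frequently_sequentially
  proof
    fix N
    have "N \<le> n N"
      using n_less by (intro seq_suble) (simp add: strict_mono_Suc_iff)
    moreover have "rho (n N) (\<Union>s. U s) \<le> rho (n N) (U N)"
      using U_below[of _ N] by (intro rho_mono) (unfold atLeast0LessThan, blast)
    ultimately show "\<exists>m\<ge>N. rho m (\<Union>s. U s) \<le> e"
      using rho_U[of N] by (meson order_trans)
  qed
qed

lemma exists_frequently_sparse_superset_of_members:
  fixes X :: "nat \<Rightarrow> nat \<Rightarrow> nat set"
  assumes "\<And>s. disjoint_family (X s)" "0 < e"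
  shows "\<exists>B. (\<forall>s. \<exists>i. X s i \<subseteq> B) \<and> (\<exists>\<^sub>F m in sequentially. rho m B \<le> e)"
proof -
  txt \<open>At stage \<open>s\<close> the slack \<open>e / 2 ^ Suc s\<close> is halved to pay for the next member.\<close>
  define P :: "nat \<Rightarrow> nat set \<times> nat \<Rightarrow> bool" where "P s = (\<lambda>(U, n).
    rho n U \<le> e \<and> (\<exists>\<^sub>F m in sequentially. rho m U \<le> e - e / 2 ^ Suc s))" for s
  define Q where "Q s = (\<lambda>(U, n) (U', n').
    n < n' \<and> (\<exists>i. X s i \<inter> {..<n} = {} \<and> U' = U \<union> X s i))" for s
  have "\<exists>f. \<forall>s. P s (f s) \<and> Q s (f s) (f (Suc s))"
  proof (rule dependent_nat_choice)
    show "\<exists>x. P 0 x"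
      unfolding P_def using \<open>0 < e\<close> by (intro exI[of _ "({}, 0)"]) (simp add: rho_def)
  next
    fix x s assume "P s x"
    obtain U n where x: "x = (U, n)" by fastforce
    have "0 < e / 2 ^ Suc (Suc s)"
      using \<open>0 < e\<close> by simp
    moreover have "\<exists>\<^sub>F m in sequentially. rho m U \<le> e - e / 2 ^ Suc s"
      using \<open>P s x\<close> by (simp add: P_def x)
    ultimately obtain i where i: "X s i \<inter> {..<n} = {}"
      "\<exists>\<^sub>F m in sequentially. rho m (U \<union> X s i) \<le> e - e / 2 ^ Suc s + e / 2 ^ Suc (Suc s)"
      using frequently_rho_Un_disjoint_family_member[OF assms(1), where n = n] by blast
    have "e - e / 2 ^ Suc s + e / 2 ^ Suc (Suc s) = e - e / 2 ^ Suc (Suc s)"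
      by (simp add: field_simps)
    with i(2) have freq:
      "\<exists>\<^sub>F m in sequentially. rho m (U \<union> X s i) \<le> e - e / 2 ^ Suc (Suc s)"
      by simp
    then obtain m where "Suc n \<le> m" "rho m (U \<union> X s i) \<le> e - e / 2 ^ Suc (Suc s)"
      unfolding frequently_sequentially by blast
    moreover have "e - e / 2 ^ Suc (Suc s) \<le> e"
      using \<open>0 < e\<close> by simp
    ultimately have "P (Suc s) (U \<union> X s i, m) \<and> Q s x (U \<union> X s i, m)"
      using freq i(1) by (auto simp: P_def Q_def x)
    then show "\<exists>y. P (Suc s) y \<and> Q s x y" by blast
  qed
  then obtain f where f: "\<And>s. P s (f s) \<and> Q s (f s) (f (Suc s))"
    by blast
  define U where "U s = fst (f s)" for s
  define n where "n s = snd (f s)" for s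
  have "P s (U s, n s) \<and> Q s (U s, n s) (U (Suc s), n (Suc s))" for s
    using f unfolding U_def n_def by simp
  then have rho_U: "rho (n s) (U s) \<le> e"
    and n_less: "n s < n (Suc s)"
    and U_Suc: "\<exists>i. X s i \<inter> {..<n s} = {} \<and> U (Suc s) = U s \<union> X s i" for s
    by (auto simp: P_def Q_def)
  have "\<exists>i. X s i \<subseteq> (\<Union>s. U s)" for s
    using U_Suc[of s] by blast
  moreover have "\<exists>\<^sub>F m in sequentially. rho m (\<Union>s. U s) \<le> e"
    by (rule frequently_rho_UN_le[where U = U and n = n]) (use n_less rho_U U_Suc in blast)+
  ultimately show ?thesis by blast
qed

definition computable_disjoint_families :: "(nat \<Rightarrow> nat set) set" where
  "computable_disjoint_families =
     {(\<lambda>i. W (f i)) | f. computable f \<and> disjoint_family (\<lambda>i. W (f i))}"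

lemma countable_computable_disjoint_families: "countable computable_disjoint_families"
proof -
  have "computable_disjoint_families \<subseteq> range (\<lambda>c i. W (THE y. eval c [i] y))"
  proof
    fix Y assume "Y \<in> computable_disjoint_families"
    then obtain f c where "Y = (\<lambda>i. W (f i))" "\<And>i. eval c [i] (f i)"
      unfolding computable_disjoint_families_def computable_def by blast
    moreover from this(2) have "(THE y. eval c [i] y) = f i" for i
      using eval_deterministic by blast
    ultimately have "Y = (\<lambda>i. W (THE y. eval c [i] y))"
      by simp
    then show "Y \<in> range (\<lambda>c i. W (THE y. eval c [i] y))"
      by blast
  qed
  then show ?thesis
    by (rule countable_subset) simp
qed

text \<open>The empty family is added only to make the enumerated set nonempty, since
  \<open>from_nat_into\<close> is unspecified on the empty set.\<close>

lemma enumeration_of_computable_disjoint_families: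
  obtains X :: "nat \<Rightarrow> nat \<Rightarrow> nat set"
  where "\<And>s. disjoint_family (X s)"
    and "\<And>f. computable f \<Longrightarrow> disjoint_family (\<lambda>i. W (f i)) \<Longrightarrow> \<exists>s. X s = (\<lambda>i. W (f i))"
proof
  define F where "F = insert (\<lambda>_. {}) computable_disjoint_families"
  show "disjoint_family (from_nat_into F s)" for s
    using from_nat_into[of F s]
    by (auto simp: F_def computable_disjoint_families_def) (simp add: disjoint_family_on_def)
  show "\<exists>s. from_nat_into F s = (\<lambda>i. W (f i))"
    if "computable f" "disjoint_family (\<lambda>i. W (f i))" for f
    using that countable_computable_disjoint_families
    by (intro from_nat_into_surj) (auto simp: F_def computable_disjoint_families_def)
qed

theorem exists_strongly_hyperhyperimmune_upper_density_ge:
  assumes "0 < \<epsilon>"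
  shows "\<exists>A. strongly_hyperhyperimmune A \<and> ereal (1 - \<epsilon>) \<le> upper_density A"
proof -
  define e where "e = min \<epsilon> (1 / 2)"
  have e: "0 < e" "e \<le> \<epsilon>" "e \<le> 1 / 2"
    using assms by (auto simp: e_def)
  obtain X :: "nat \<Rightarrow> nat \<Rightarrow> nat set" where X: "\<And>s. disjoint_family (X s)"
    "\<And>f. computable f \<Longrightarrow> disjoint_family (\<lambda>i. W (f i)) \<Longrightarrow> \<exists>s. X s = (\<lambda>i. W (f i))"
    using enumeration_of_computable_disjoint_families by metis
  from exists_frequently_sparse_superset_of_members[where X = X, OF X(1) e(1)] obtain B
    where B: "\<forall>s. \<exists>i. X s i \<subseteq> B" "\<exists>\<^sub>F m in sequentially. rho m B \<le> e"
    by (elim exE conjE)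
  have "\<exists>\<^sub>F m in sequentially. 1 - e \<le> rho m (- B)"
    using frequently_eventually_frequently[OF B(2) eventually_gt_at_top[of 0]]
    by (rule frequently_elim1) (simp add: rho_Compl)
  then have density: "ereal (1 - e) \<le> upper_density (- B)"
    by (rule upper_density_ge)
  have "infinite (- B)"
    using density e(3) upper_density_finite by fastforce
  moreover have "\<exists>i. W (f i) \<inter> - B = {}"
    if f: "computable f" "disjoint_family (\<lambda>i. W (f i))" for f
  proof -
    obtain s where "X s = (\<lambda>i. W (f i))"
      using X(2)[OF f] by blast
    moreover obtain i where "X s i \<subseteq> B"
      using B(1) by blast
    ultimately show ?thesis by auto
  qed
  ultimately have "strongly_hyperhyperimmune (- B)"
    by (simp add: strongly_hyperhyperimmune_iff)
  moreover have "ereal (1 - \<epsilon>) \<le> upper_density (- B)"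
    using density e(2) by (metis diff_left_mono ereal_less_eq(3) order_trans)
  ultimately show ?thesis by blast
qed

theorem mainTheorem20:
  shows "(\<forall>A. strongly_hyperhyperimmune A \<longrightarrow> upper_density A \<noteq> 1)
       \<and> (\<forall>\<epsilon>::real. \<epsilon> > 0 \<longrightarrow>
            (\<exists>A. strongly_hyperhyperimmune A \<and> upper_density A \<ge> ereal (1 - \<epsilon>)))"
  using strongly_hyperhyperimmune_upper_density_neq_one
    exists_strongly_hyperhyperimmune_upper_density_ge
  by blast

end
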